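(* Consider any realization of a run of Algorithm 4 (described in the context) under the standing assumption. For every $k\in\mathcal{K}$, if $k\in\mathcal{U}$ then $\delta_k>3(1-\eta)\epsilon_H/(2L_H)$. Consequently, for every realization, \[ \delta_k\ \ge\ \bar\delta_{\min}:=\min\Big\{\delta_0,\ \tfrac{3\gamma_1(1-\eta)}{2L_H}\epsilon_H\Big\}\in(0,\infty)\quad\text{for all }k\in\mathcal{K}. \]
   Context: Let $f:\mathbb{R}^n\to\mathbb{R}$ with gradient $g=\nabla f$ and Hessian $H=\nabla^2f$; $\|\cdot\|$ is the Euclidean norm, $\lambda_{\min}$ the smallest eigenvalue, $\mathbb{S}^n$ the real symmetric $n\times n$ matrices. Write $f_k=f(x_k)$, $g_k=g(x_k)$, $H_k=H(x_k)$, $m_k(x)=f_k+g_k^T(x-x_k)+\tfrac12(x-x_k)^TH_k(x-x_k)$. Exact arithmetic is assumed. Algorithm 2 (truncated CG; inputs nonzero $g$, $H\in\mathbb{S}^n$, $\epsilon>0$, $\delta>0$, $\zeta\in(0,1)$, flag capCG, and $M\ge\|H\|$): $k_{\max}=\min\{n,\tfrac12\sqrt{\kappa}\ln(4\kappa^{3/2}/\zeta)\}$ with $\kappa=(M+2\epsilon)/\epsilon$ if capCG is true, else $k_{\max}=n$. Set $y_0=0,r_0=g,p_0=-g,j=0$. While $j<k_{\max}$: if $p_j^T(H+2\epsilon I)p_j\le\epsilon\|p_j\|^2$, return $s=y_j+\sigma p_j$ with $\sigma\ge0$, $\|s\|=\delta$, flag BND-NEG; set $\alpha_j=\|r_j\|^2/(p_j^T(H+2\epsilon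 I)p_j)$, $y_{j+1}=y_j+\alpha_jp_j$; if $\|y_{j+1}\|\ge\delta$, return $s=y_j+\sigma p_j$ with $\sigma\ge0$, $\|s\|=\delta$, flag BND-NORM; set $r_{j+1}=r_j+\alpha_j(H+2\epsilon I)p_j$; if $\|r_{j+1}\|\le\tfrac\zeta2\min\{\|g\|,\epsilon\|y_{j+1}\|\}$, return $s=y_{j+1}$, flag INT-RES; set $\beta_{j+1}=\|r_{j+1}\|^2/\|r_j\|^2$, $p_{j+1}=-r_{j+1}+\beta_{j+1}p_j$, $j\leftarrow j+1$. On loop exit return $s=y_j$, flag INT-MAX. Algorithm 3 (minimum eigenvalue oracle, MEO; inputs $g$, $H\in\mathbb{S}^n$, $\epsilon>0$, $\delta>0$, $\xi\in(0,1)$, $M\ge\|H\|$): a possibly randomized procedure that either returns $s=\pm\delta v$ with $\|v\|=1$, $v^THv\le-\epsilon/2$, satisfying $g^Ts\le0$, $s^THs\le-\tfrac12\epsilon\|s\|^2$, $\|s\|=\delta$, or returns an indication that $H\succeq-\epsilon I$. Algorithm 4 (inexact trust-region Newton-CG). Inputs: $\epsilon_g,\epsilon_H>0$; $\gamma_1\in(0,1)$, $\gamma_2\ge1$, $\psi\in(1/\gamma_2,1]$; $x_0$; $\delta_0>0$; $\delta_{\max}\ge\delta_0$; $\eta\in(0,1)$; $\zeta\in(0,1)$; $\xi\in[0,1)$; capCG; $M\ge L_g$. For $k=0,1,\dots$: evaluate $g_k,H_k$. If $g_k\ne0$, call Algorithm 2 with $(g_k,H_k,\epsilon_H,\delta_k,\zeta,\text{capCG},M)$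 obtaining $s_k^{CG}$ and flag outCG; else set $s_k^{CG}=0$, outCG$=$INT-RES. If outCG$\in\{$BND-NEG, BND-NORM$\}$ or ($\|g_k\|>\epsilon_g$ and outCG$=$INT-RES), set $s_k=s_k^{CG}$. Otherwise call Algorithm 3 with $(g_k,H_k,\epsilon_H,\delta_k,\xi,M)$; if it indicates $H_k\succeq-\epsilon_HI$, return $x_k$ (terminate), else take its output as $s_k$. Set $\rho_k=\frac{f_k-f(x_k+s_k)}{m_k(x_k)-m_k(x_k+s_k)}$. If $\rho_k\ge\eta$: $x_{k+1}=x_k+s_k$ and $\delta_{k+1}=\min\{\gamma_2\delta_k,\delta_{\max}\}$ if $\|s_k\|\ge\psi\delta_k$, else $\delta_{k+1}=\delta_k$. If $\rho_k<\eta$: $x_{k+1}=x_k$, $\delta_{k+1}=\gamma_1\|s_k\|$. $\mathcal{K}$ is the set of indices $k$ such that iteration $k$ is completed without termination (for the given realization); $\mathcal{U}=\{k\in\mathcal{K}:\rho_k<\eta\}$. Standing assumption: $\{f_k\}$ is bounded below by some $f_{\rm low}\in\mathbb{R}$, and all segments $[x_k,x_k+s_k]$ lie in an open set on which $f$ is twice continuously differentiable with gradient Lipschitz with constant $L_g>0$ and Hessian Lipschitz with constant $L_H>0$. *)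

theory Defs
  imports "HOL-Analysis.Analysis"
begin

section \<open>Algorithm 2: truncated (capped) conjugate gradient\<close>

datatype cg_flag = BND_NEG | BND_NORM | INT_RES | INT_MAX

definition cg_kmax :: "bool \<Rightarrow> real \<Rightarrow> real \<Rightarrow> real \<Rightarrow> nat \<Rightarrow> real" where
  "cg_kmax capCG M \<epsilon> \<zeta> n =
     (if capCG then
        (let \<kappa> = (M + 2 * \<epsilon>) / \<epsilon>
         in min (real n) ((1/2) * sqrt \<kappa> * ln (4 * \<kappa> powr (3/2) / \<zeta>)))
      else real n)"

definition shiftH :: "real^'n^'n \<Rightarrow> real \<Rightarrow> real^'n^'n" where
  "shiftH H \<epsilon> = H + (2 * \<epsilon>) *\<^sub>R mat 1"

text \<open>The sequences y, r, p are the CG iterates; J is the index at which the loop is left.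
  Exact arithmetic; the run is completely described by the recurrences.\<close>
definition truncated_cg ::
  "real^'n \<Rightarrow> real^'n^'n \<Rightarrow> real \<Rightarrow> real \<Rightarrow> real \<Rightarrow> bool \<Rightarrow> real \<Rightarrow> real^'n \<Rightarrow> cg_flag \<Rightarrow> bool"
where
  "truncated_cg g H \<epsilon> \<delta> \<zeta> capCG M s flag \<longleftrightarrow>
    (let kmax = cg_kmax capCG M \<epsilon> \<zeta> CARD('n); Hb = shiftH H \<epsilon> in
     \<exists>(y::nat \<Rightarrow> real^'n) r p J.
       y 0 = 0 \<and> r 0 = g \<and> p 0 = - g \<and>
       (\<forall>j<J. real j < kmax \<and>
          p j \<bullet> (Hb *v p j) > \<epsilon> * (norm (p j))\<^sup>2 \<and>
          (let \<alpha> = (norm (r j))\<^sup>2 / (p j \<bullet> (Hb *v p j)) in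
             y (Suc j) = y j + \<alpha> *\<^sub>R p j \<and>
             norm (y (Suc j)) < \<delta> \<and>
             r (Suc j) = r j + \<alpha> *\<^sub>R (Hb *v p j) \<and>
             \<not> (norm (r (Suc j)) \<le> (\<zeta> / 2) * min (norm g) (\<epsilon> * norm (y (Suc j)))) \<and>
             p (Suc j) = - r (Suc j) + ((norm (r (Suc j)))\<^sup>2 / (norm (r j))\<^sup>2) *\<^sub>R p j)) \<and>
       ( (kmax \<le> real J \<and> flag = INT_MAX \<and> s = y J)
       \<or> (real J < kmax \<and> p J \<bullet> (Hb *v p J) \<le> \<epsilon> * (norm (p J))\<^sup>2 \<and>
           flag = BND_NEG \<and> (\<exists>\<sigma>\<ge>0. s = y J + \<sigma> *\<^sub>R p J \<and> norm s = \<delta>))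
       \<or> (real J < kmax \<and> p J \<bullet> (Hb *v p J) > \<epsilon> * (norm (p J))\<^sup>2 \<and>
           (let \<alpha> = (norm (r J))\<^sup>2 / (p J \<bullet> (Hb *v p J));
                yn = y J + \<alpha> *\<^sub>R p J;
                rn = r J + \<alpha> *\<^sub>R (Hb *v p J) in
              (norm yn \<ge> \<delta> \<and> flag = BND_NORM \<and>
                 (\<exists>\<sigma>\<ge>0. s = y J + \<sigma> *\<^sub>R p J \<and> norm s = \<delta>))
            \<or> (norm yn < \<delta> \<and> norm rn \<le> (\<zeta> / 2) * min (norm g) (\<epsilon> * norm yn) \<and>
                 flag = INT_RES \<and> s = yn)))))"

section \<open>Algorithm 3: minimum eigenvalue oracle (specification of an output)\<close>

text \<open>A (possibly randomized) MEO realization either returns a vector s (Some s) with the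
  stated properties, or (None) an indication that H is PSD up to -eps; the latter leads
  to termination of Algorithm 4.\<close>
definition meo_returns :: "real^'n \<Rightarrow> real^'n^'n \<Rightarrow> real \<Rightarrow> real \<Rightarrow> real^'n \<Rightarrow> bool" where
  "meo_returns g H \<epsilon> \<delta> s \<longleftrightarrow>
     (\<exists>v. norm v = 1 \<and> v \<bullet> (H *v v) \<le> - \<epsilon> / 2 \<and> (s = \<delta> *\<^sub>R v \<or> s = - (\<delta> *\<^sub>R v))) \<and>
     g \<bullet> s \<le> 0 \<and> s \<bullet> (H *v s) \<le> - (1/2) * \<epsilon> * (norm s)\<^sup>2 \<and> norm s = \<delta>"

section \<open>Algorithm 4: inexact trust-region Newton-CG\<close>

definition qmodel :: "(real^'n \<Rightarrow> real) \<Rightarrow> (real^'n \<Rightarrow> real^'n) \<Rightarrow> (real^'n \<Rightarrow> real^'n^'n)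
    \<Rightarrow> real^'n \<Rightarrow> real^'n \<Rightarrow> real" where
  "qmodel f g H xk x = f xk + g xk \<bullet> (x - xk) + (1/2) * ((x - xk) \<bullet> (H xk *v (x - xk)))"

definition tr_rho :: "(real^'n \<Rightarrow> real) \<Rightarrow> (real^'n \<Rightarrow> real^'n) \<Rightarrow> (real^'n \<Rightarrow> real^'n^'n)
    \<Rightarrow> real^'n \<Rightarrow> real^'n \<Rightarrow> real" where
  "tr_rho f g H xk sk =
     (f xk - f (xk + sk)) / (qmodel f g H xk xk - qmodel f g H xk (xk + sk))"

definition alg4_cg_call :: "(real^'n \<Rightarrow> real^'n) \<Rightarrow> (real^'n \<Rightarrow> real^'n^'n) \<Rightarrow> real \<Rightarrow> real
    \<Rightarrow> bool \<Rightarrow> real \<Rightarrow> real^'n \<Rightarrow> real \<Rightarrow> real^'n \<Rightarrow> cg_flag \<Rightarrow> bool" where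
  "alg4_cg_call g H \<epsilon>H \<zeta> capCG M xk dk sCG outCG \<longleftrightarrow>
     (if g xk \<noteq> 0 then truncated_cg (g xk) (H xk) \<epsilon>H dk \<zeta> capCG M sCG outCG
      else sCG = 0 \<and> outCG = INT_RES)"

definition alg4_use_cg :: "real \<Rightarrow> real^'n \<Rightarrow> cg_flag \<Rightarrow> bool" where
  "alg4_use_cg \<epsilon>g gk outCG \<longleftrightarrow>
     outCG \<in> {BND_NEG, BND_NORM} \<or> (norm gk > \<epsilon>g \<and> outCG = INT_RES)"

definition alg4_step :: "(real^'n \<Rightarrow> real) \<Rightarrow> (real^'n \<Rightarrow> real^'n) \<Rightarrow> (real^'n \<Rightarrow> real^'n^'n)
    \<Rightarrow> real \<Rightarrow> real \<Rightarrow> real \<Rightarrow> real \<Rightarrow> real \<Rightarrow> real \<Rightarrow> real \<Rightarrow> real \<Rightarrow> bool \<Rightarrow> real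
    \<Rightarrow> real^'n \<Rightarrow> real \<Rightarrow> real^'n \<Rightarrow> real^'n \<Rightarrow> real \<Rightarrow> bool" where
  "alg4_step f g H \<epsilon>g \<epsilon>H \<gamma>1 \<gamma>2 \<psi> \<delta>max \<eta> \<zeta> capCG M xk dk sk x' d' \<longleftrightarrow>
     (\<exists>sCG outCG. alg4_cg_call g H \<epsilon>H \<zeta> capCG M xk dk sCG outCG \<and>
        (if alg4_use_cg \<epsilon>g (g xk) outCG then sk = sCG
         else meo_returns (g xk) (H xk) \<epsilon>H dk sk)) \<and>
     (if tr_rho f g H xk sk \<ge> \<eta>
      then x' = xk + sk \<and> d' = (if norm sk \<ge> \<psi> * dk then min (\<gamma>2 * dk) \<delta>max else dk)
      else x' = xk \<and> d' = \<gamma>1 * norm sk)"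

text \<open>Iteration k of Algorithm 4 reaches the MEO call (and terminates there, when the
  MEO reports H_k >= -eps_H I).\<close>
definition alg4_reaches_meo :: "(real^'n \<Rightarrow> real^'n) \<Rightarrow> (real^'n \<Rightarrow> real^'n^'n)
    \<Rightarrow> real \<Rightarrow> real \<Rightarrow> real \<Rightarrow> bool \<Rightarrow> real \<Rightarrow> real^'n \<Rightarrow> real \<Rightarrow> bool" where
  "alg4_reaches_meo g H \<epsilon>g \<epsilon>H \<zeta> capCG M xk dk \<longleftrightarrow>
     (\<exists>sCG outCG. alg4_cg_call g H \<epsilon>H \<zeta> capCG M xk dk sCG outCG \<and>
        \<not> alg4_use_cg \<epsilon>g (g xk) outCG)"

text \<open>A realization of a run of Algorithm 4: iterates x, radii d, trial steps s, and the set
  K of iterations completed without termination.\<close>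
definition alg4_run :: "(real^'n \<Rightarrow> real) \<Rightarrow> (real^'n \<Rightarrow> real^'n) \<Rightarrow> (real^'n \<Rightarrow> real^'n^'n)
    \<Rightarrow> real \<Rightarrow> real \<Rightarrow> real \<Rightarrow> real \<Rightarrow> real \<Rightarrow> real^'n \<Rightarrow> real \<Rightarrow> real \<Rightarrow> real \<Rightarrow> real
    \<Rightarrow> bool \<Rightarrow> real
    \<Rightarrow> (nat \<Rightarrow> real^'n) \<Rightarrow> (nat \<Rightarrow> real) \<Rightarrow> (nat \<Rightarrow> real^'n) \<Rightarrow> nat set \<Rightarrow> bool" where
  "alg4_run f g H \<epsilon>g \<epsilon>H \<gamma>1 \<gamma>2 \<psi> x0 \<delta>0 \<delta>max \<eta> \<zeta> capCG M x d s K \<longleftrightarrow>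
     x 0 = x0 \<and> d 0 = \<delta>0 \<and>
     (\<forall>k\<in>K. \<forall>j<k. j \<in> K) \<and>
     (\<forall>k\<in>K. alg4_step f g H \<epsilon>g \<epsilon>H \<gamma>1 \<gamma>2 \<psi> \<delta>max \<eta> \<zeta> capCG M
                (x k) (d k) (s k) (x (Suc k)) (d (Suc k))) \<and>
     (\<forall>k. k \<notin> K \<longrightarrow> (\<forall>j<k. j \<in> K) \<longrightarrow> alg4_reaches_meo g H \<epsilon>g \<epsilon>H \<zeta> capCG M (x k) (d k))"

end

theory Submission
  imports Defs
begin

text \<open>Every trial step is nonzero, lies in the trust region and predicts a decrease of at
least \<open>\<epsilon>\<^sub>H \<parallel>s\<^sub>k\<parallel>\<^sup>2 / 4\<close>: for MEO steps this is their specification, for CG steps it follows from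
the orthogonality relations of conjugate gradients applied to \<open>H\<^sub>k + 2\<epsilon>\<^sub>H I\<close> (symmetric by
Schwarz's theorem), whose quadratic
model is nonpositive along the final direction up to the CG step length and is controlled by
the curvature test otherwise. The Lipschitz Hessian bounds the true decrease by the predicted one
up to \<open>L\<^sub>H \<parallel>s\<^sub>k\<parallel>\<^sup>3 / 6\<close>, so \<open>\<rho>\<^sub>k < \<eta>\<close> forces \<open>\<parallel>s\<^sub>k\<parallel> > 3 (1 - \<eta>) \<epsilon>\<^sub>H / (2 L\<^sub>H)\<close>. The radius
shrinks only after such steps, to \<open>\<gamma>\<^sub>1 \<parallel>s\<^sub>k\<parallel>\<close>, which gives the lower bound by induction.\<close>

section \<open>Taylor bound and symmetry of the Hessian\<close>

text \<open>\<open>model_increment (g x\<^sub>k) (H x\<^sub>k) v = m\<^sub>k(x\<^sub>k + v) - f\<^sub>k\<close>.\<close>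
definition model_increment :: "real^'n \<Rightarrow> real^'n^'n \<Rightarrow> real^'n \<Rightarrow> real" where
  "model_increment b A v = b \<bullet> v + 1/2 * (v \<bullet> (A *v v))"

lemma has_real_derivative_along_line:
  assumes "(f has_derivative (\<lambda>h. G \<bullet> h)) (at (a + t *\<^sub>R v))"
  shows "((\<lambda>t. f (a + t *\<^sub>R v)) has_real_derivative (G \<bullet> v)) (at t)"
proof -
  have "((\<lambda>t. a + t *\<^sub>R v) has_derivative (\<lambda>h. h *\<^sub>R v)) (at t)"
    by (auto intro!: derivative_eq_intros)
  from has_derivative_compose[OF this assms]
  show ?thesis
    by (rule has_derivative_imp_has_field_derivative) simp
qed

lemma has_real_derivative_along_line_inner:
  fixes g :: "real^'n \<Rightarrow> real^'n"
  assumes "(g has_derivative (\<lambda>h. B *v h)) (at (a + t *\<^sub>R v))"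
  shows "((\<lambda>t. g (a + t *\<^sub>R v) \<bullet> w) has_real_derivative ((B *v v) \<bullet> w)) (at t)"
proof -
  have "((\<lambda>t. a + t *\<^sub>R v) has_derivative (\<lambda>h. h *\<^sub>R v)) (at t)"
    by (auto intro!: derivative_eq_intros)
  from has_derivative_compose[OF this assms]
  have "((\<lambda>t. g (a + t *\<^sub>R v)) has_derivative (\<lambda>h. h *\<^sub>R (B *v v))) (at t)"
    by (simp add: matrix_vector_mult_scaleR)
  then have "((\<lambda>t. g (a + t *\<^sub>R v) \<bullet> w) has_derivative (\<lambda>h. (h *\<^sub>R (B *v v)) \<bullet> w)) (at t)"
    by (auto intro!: derivative_eq_intros)
  then show ?thesis
    by (rule has_derivative_imp_has_field_derivative) simp
qed

lemma matrix_inner_le_onorm: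
  fixes B :: "real^'n^'n"
  shows "(B *v u) \<bullet> v \<le> onorm (\<lambda>w. B *v w) * norm u * norm v"
proof -
  have "(B *v u) \<bullet> v \<le> norm (B *v u) * norm v" by (rule norm_cauchy_schwarz)
  also have "\<dots> \<le> onorm (\<lambda>w. B *v w) * norm u * norm v"
    using onorm[OF matrix_vector_mul_bounded_linear[of B]] by (simp add: mult_right_mono)
  finally show ?thesis .
qed

lemma Lipschitz_hessian_inner_diff:
  fixes H :: "real^'n \<Rightarrow> real^'n^'n"
  assumes "\<forall>y\<in>S. \<forall>z\<in>S. onorm (\<lambda>v. (H y - H z) *v v) \<le> LH * norm (y - z)"
    and "y \<in> S" "z \<in> S"
  shows "(H y *v u) \<bullet> v - (H z *v u) \<bullet> v \<le> LH * norm (y - z) * norm u * norm v"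
proof -
  have "(H y *v u) \<bullet> v - (H z *v u) \<bullet> v = ((H y - H z) *v u) \<bullet> v"
    by (simp add: matrix_vector_mult_diff_rdistrib inner_diff_left)
  also have "\<dots> \<le> onorm (\<lambda>w. (H y - H z) *v w) * norm u * norm v"
    by (rule matrix_inner_le_onorm)
  also have "\<dots> \<le> LH * norm (y - z) * norm u * norm v"
    using assms by (auto intro!: mult_right_mono)
  finally show ?thesis .
qed

lemma cubic_taylor_upper_bound_real:
  fixes \<phi> \<phi>' \<phi>'' :: "real \<Rightarrow> real"
  assumes d1: "\<And>t. t \<in> {0..1} \<Longrightarrow> (\<phi> has_real_derivative \<phi>' t) (at t)"
    and d2: "\<And>t. t \<in> {0..1} \<Longrightarrow> (\<phi>' has_real_derivative \<phi>'' t) (at t)"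
    and lip: "\<And>t. t \<in> {0..1} \<Longrightarrow> \<phi>'' t \<le> \<phi>'' 0 + L * t"
  shows "\<phi> 1 \<le> \<phi> 0 + \<phi>' 0 + \<phi>'' 0 / 2 + L / 6"
proof -
  define q' where "q' t = \<phi>' t - \<phi>' 0 - t * \<phi>'' 0 - L * t\<^sup>2 / 2" for t
  define q where "q t = \<phi> t - \<phi> 0 - t * \<phi>' 0 - t\<^sup>2 / 2 * \<phi>'' 0 - L * t ^ 3 / 6" for t
  have q'_nonpos: "q' t \<le> 0" if "t \<in> {0..1}" for t
  proof -
    have "q' t \<le> q' 0"
    proof (rule DERIV_nonpos_imp_nonincreasing[of 0 t q'])
      fix u assume "0 \<le> u" "u \<le> t"
      with that have "u \<in> {0..1}" by auto
      have "(q' has_real_derivative \<phi>'' u - \<phi>'' 0 - L * u) (at u)"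
        unfolding q'_def using d2[OF \<open>u \<in> {0..1}\<close>]
        by (auto intro!: derivative_eq_intros)
      then show "\<exists>y. (q' has_real_derivative y) (at u) \<and> y \<le> 0"
        using lip[OF \<open>u \<in> {0..1}\<close>] by auto
    qed (use that in auto)
    then show ?thesis by (simp add: q'_def)
  qed
  have "q 1 \<le> q 0"
  proof (rule DERIV_nonpos_imp_nonincreasing[of 0 1 q])
    fix u :: real assume "0 \<le> u" "u \<le> 1"
    then have "u \<in> {0..1}" by auto
    have "(q has_real_derivative q' u) (at u)"
      unfolding q_def q'_def using d1[OF \<open>u \<in> {0..1}\<close>]
      by (auto intro!: derivative_eq_intros simp: power2_eq_square)
    then show "\<exists>y. (q has_real_derivative y) (at u) \<and> y \<le> 0"
      using q'_nonpos[OF \<open>u \<in> {0..1}\<close>] by auto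
  qed simp
  then show ?thesis by (simp add: q_def)
qed

lemma cubic_taylor_upper_bound:
  fixes f :: "real^'n \<Rightarrow> real" and g :: "real^'n \<Rightarrow> real^'n" and H :: "real^'n \<Rightarrow> real^'n^'n"
  assumes seg: "closed_segment x (x + s) \<subseteq> S"
    and grad: "\<forall>y\<in>S. (f has_derivative (\<lambda>h. g y \<bullet> h)) (at y)"
    and hess: "\<forall>y\<in>S. (g has_derivative (\<lambda>h. H y *v h)) (at y)"
    and H_lip: "\<forall>y\<in>S. \<forall>z\<in>S. onorm (\<lambda>v. (H y - H z) *v v) \<le> LH * norm (y - z)"
  shows "f (x + s) \<le> f x + model_increment (g x) (H x) s + LH / 6 * norm s ^ 3"
proof -
  have on_seg: "x + t *\<^sub>R s \<in> S" if "t \<in> {0..1}" for t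
  proof -
    have "(1 - t) *\<^sub>R x + t *\<^sub>R (x + s) \<in> closed_segment x (x + s)"
      using that by (auto simp: in_segment)
    moreover have "(1 - t) *\<^sub>R x + t *\<^sub>R (x + s) = x + t *\<^sub>R s"
      by (simp add: algebra_simps)
    ultimately show ?thesis using seg by auto
  qed
  have "f (x + 1 *\<^sub>R s) \<le> f (x + 0 *\<^sub>R s) + g (x + 0 *\<^sub>R s) \<bullet> s
      + (H (x + 0 *\<^sub>R s) *v s) \<bullet> s / 2 + LH * norm s ^ 3 / 6"
  proof (rule cubic_taylor_upper_bound_real)
    fix t :: real assume t: "t \<in> {0..1}"
    show "((\<lambda>t. f (x + t *\<^sub>R s)) has_real_derivative g (x + t *\<^sub>R s) \<bullet> s) (at t)"
      using on_seg[OF t] grad by (intro has_real_derivative_along_line) auto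
    show "((\<lambda>t. g (x + t *\<^sub>R s) \<bullet> s) has_real_derivative (H (x + t *\<^sub>R s) *v s) \<bullet> s) (at t)"
      using on_seg[OF t] hess by (intro has_real_derivative_along_line_inner) auto
    have "x \<in> S" using on_seg[of 0] by simp
    from Lipschitz_hessian_inner_diff[OF H_lip on_seg[OF t] this, of s s]
    have "(H (x + t *\<^sub>R s) *v s) \<bullet> s - (H x *v s) \<bullet> s \<le> LH * (t * norm s) * norm s * norm s"
      using t by simp
    also have "\<dots> = LH * norm s ^ 3 * t" by (simp add: power3_eq_cube)
    finally show "(H (x + t *\<^sub>R s) *v s) \<bullet> s \<le> (H (x + 0 *\<^sub>R s) *v s) \<bullet> s + LH * norm s ^ 3 * t"
      by simp
  qed
  then show ?thesis by (simp add: model_increment_def inner_commute)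
qed

lemma second_difference_mean_value:
  fixes f :: "real^'n \<Rightarrow> real" and g :: "real^'n \<Rightarrow> real^'n" and H :: "real^'n \<Rightarrow> real^'n^'n"
  assumes t: "0 < t"
    and box: "\<And>a b. a \<in> {0..t} \<Longrightarrow> b \<in> {0..t} \<Longrightarrow> x + a *\<^sub>R u + b *\<^sub>R v \<in> S"
    and grad: "\<forall>y\<in>S. (f has_derivative (\<lambda>h. g y \<bullet> h)) (at y)"
    and hess: "\<forall>y\<in>S. (g has_derivative (\<lambda>h. H y *v h)) (at y)"
  obtains a b where "a \<in> {0..t}" "b \<in> {0..t}"
    "f (x + t *\<^sub>R u + t *\<^sub>R v) - f (x + t *\<^sub>R u) - f (x + t *\<^sub>R v) + f x
       = t\<^sup>2 * ((H (x + a *\<^sub>R u + b *\<^sub>R v) *v u) \<bullet> v)"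
proof -
  define \<phi> where "\<phi> b = f ((x + t *\<^sub>R u) + b *\<^sub>R v) - f (x + b *\<^sub>R v)" for b
  have "(\<phi> has_real_derivative g ((x + t *\<^sub>R u) + b *\<^sub>R v) \<bullet> v - g (x + b *\<^sub>R v) \<bullet> v) (at b)"
    if "0 \<le> b" "b \<le> t" for b
    unfolding \<phi>_def using box[of t b] box[of 0 b] that t grad
    by (intro DERIV_diff has_real_derivative_along_line) auto
  from MVT2[OF t this] obtain b where b: "0 < b" "b < t"
    and \<phi>_diff: "\<phi> t - \<phi> 0 = t * (g ((x + t *\<^sub>R u) + b *\<^sub>R v) \<bullet> v - g (x + b *\<^sub>R v) \<bullet> v)"
    by auto
  define \<psi> where "\<psi> a = g ((x + b *\<^sub>R v) + a *\<^sub>R u) \<bullet> v" for a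
  have "(\<psi> has_real_derivative (H ((x + b *\<^sub>R v) + a *\<^sub>R u) *v u) \<bullet> v) (at a)"
    if "0 \<le> a" "a \<le> t" for a
  proof -
    have "(x + b *\<^sub>R v) + a *\<^sub>R u = x + a *\<^sub>R u + b *\<^sub>R v" by (simp add: algebra_simps)
    moreover have "x + a *\<^sub>R u + b *\<^sub>R v \<in> S" using box[of a b] that b by auto
    ultimately have "(x + b *\<^sub>R v) + a *\<^sub>R u \<in> S" by (simp only:)
    then show ?thesis unfolding \<psi>_def using hess by (intro has_real_derivative_along_line_inner) auto
  qed
  from MVT2[OF t this] obtain a where a: "0 < a" "a < t"
    and \<psi>_diff: "\<psi> t - \<psi> 0 = t * ((H ((x + b *\<^sub>R v) + a *\<^sub>R u) *v u) \<bullet> v)"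
    by auto
  have "(x + b *\<^sub>R v) + a *\<^sub>R u = x + a *\<^sub>R u + b *\<^sub>R v" "x + t *\<^sub>R u + b *\<^sub>R v = (x + b *\<^sub>R v) + t *\<^sub>R u"
    by (simp_all add: algebra_simps)
  with \<phi>_diff \<psi>_diff have "f (x + t *\<^sub>R u + t *\<^sub>R v) - f (x + t *\<^sub>R u) - f (x + t *\<^sub>R v) + f x
       = t\<^sup>2 * ((H (x + a *\<^sub>R u + b *\<^sub>R v) *v u) \<bullet> v)"
    by (simp add: \<phi>_def \<psi>_def power2_eq_square)
  moreover have "a \<in> {0..t}" "b \<in> {0..t}" using a b by auto
  ultimately show ?thesis using that by blast
qed

lemma norm_scaleR_add_le:
  assumes "a \<in> {0..t}" "b \<in> {0..t}"
  shows "norm (a *\<^sub>R u + b *\<^sub>R v) \<le> t * (norm u + norm v)"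
proof -
  have "norm (a *\<^sub>R u + b *\<^sub>R v) \<le> a * norm u + b * norm v"
    using norm_triangle_ineq[of "a *\<^sub>R u" "b *\<^sub>R v"] assms by simp
  also have "\<dots> \<le> t * (norm u + norm v)"
    using assms by (simp add: distrib_left add_mono mult_right_mono)
  finally show ?thesis .
qed

lemma hessian_asymmetry_le:
  fixes f :: "real^'n \<Rightarrow> real" and g :: "real^'n \<Rightarrow> real^'n" and H :: "real^'n \<Rightarrow> real^'n^'n"
  assumes "0 < t" "0 \<le> LH"
    and square: "\<And>a b. a \<in> {0..t} \<Longrightarrow> b \<in> {0..t} \<Longrightarrow>
      x + a *\<^sub>R u + b *\<^sub>R v \<in> S \<and> x + a *\<^sub>R v + b *\<^sub>R u \<in> S"
    and grad: "\<forall>y\<in>S. (f has_derivative (\<lambda>h. g y \<bullet> h)) (at y)"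
    and hess: "\<forall>y\<in>S. (g has_derivative (\<lambda>h. H y *v h)) (at y)"
    and H_lip: "\<forall>y\<in>S. \<forall>z\<in>S. onorm (\<lambda>v. (H y - H z) *v v) \<le> LH * norm (y - z)"
  shows "\<bar>(H x *v u) \<bullet> v - (H x *v v) \<bullet> u\<bar> \<le> 2 * LH * t * (norm u + norm v) * norm u * norm v"
proof -
  have "x \<in> S" using square[of 0 0] \<open>0 < t\<close> by simp
  have close: "\<bar>(H z *v w1) \<bullet> w2 - (H x *v w1) \<bullet> w2\<bar> \<le> LH * t * (norm u + norm v) * norm u * norm v"
    if "z = x + a *\<^sub>R w1 + b *\<^sub>R w2" "a \<in> {0..t}" "b \<in> {0..t}" "(w1, w2) \<in> {(u, v), (v, u)}"
    for z a b w1 w2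
  proof -
    have "z \<in> S" using square[OF that(2,3)] that(1,4) by auto
    have "norm (z - x) \<le> t * (norm u + norm v)"
      using norm_scaleR_add_le[OF that(2,3), of w1 w2] that(1,4) by (auto simp: add.assoc add.commute)
    then have "LH * norm (z - x) * norm w1 * norm w2 \<le> LH * (t * (norm u + norm v)) * norm w1 * norm w2"
      using \<open>0 \<le> LH\<close> by (intro mult_right_mono mult_left_mono) auto
    moreover have "norm w1 * norm w2 = norm u * norm v" using that(4) by auto
    ultimately show ?thesis
      using Lipschitz_hessian_inner_diff[OF H_lip \<open>z \<in> S\<close> \<open>x \<in> S\<close>, of w1 w2]
        Lipschitz_hessian_inner_diff[OF H_lip \<open>x \<in> S\<close> \<open>z \<in> S\<close>, of w1 w2]
      by (simp add: abs_le_iff norm_minus_commute mult.assoc)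
  qed
  obtain a1 b1 where ab1: "a1 \<in> {0..t}" "b1 \<in> {0..t}"
    and \<Delta>1: "f (x + t *\<^sub>R u + t *\<^sub>R v) - f (x + t *\<^sub>R u) - f (x + t *\<^sub>R v) + f x
       = t\<^sup>2 * ((H (x + a1 *\<^sub>R u + b1 *\<^sub>R v) *v u) \<bullet> v)"
    using second_difference_mean_value[OF \<open>0 < t\<close> _ grad hess] square by blast
  obtain a2 b2 where ab2: "a2 \<in> {0..t}" "b2 \<in> {0..t}"
    and \<Delta>2: "f (x + t *\<^sub>R v + t *\<^sub>R u) - f (x + t *\<^sub>R v) - f (x + t *\<^sub>R u) + f x
       = t\<^sup>2 * ((H (x + a2 *\<^sub>R v + b2 *\<^sub>R u) *v v) \<bullet> u)"
    using second_difference_mean_value[OF \<open>0 < t\<close> _ grad hess] square by blast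
  have "x + t *\<^sub>R v + t *\<^sub>R u = x + t *\<^sub>R u + t *\<^sub>R v" by (simp add: algebra_simps)
  with \<Delta>1 \<Delta>2 have "t\<^sup>2 * ((H (x + a1 *\<^sub>R u + b1 *\<^sub>R v) *v u) \<bullet> v)
      = t\<^sup>2 * ((H (x + a2 *\<^sub>R v + b2 *\<^sub>R u) *v v) \<bullet> u)"
    by (simp only:)
  with \<open>0 < t\<close> have "(H (x + a1 *\<^sub>R u + b1 *\<^sub>R v) *v u) \<bullet> v = (H (x + a2 *\<^sub>R v + b2 *\<^sub>R u) *v v) \<bullet> u"
    by simp
  moreover note close[OF refl ab1, of u v] close[OF refl ab2, of v u]
  ultimately show ?thesis by (simp add: abs_le_iff algebra_simps)
qed

text \<open>Schwarz's theorem: the asymmetry bound above tends to zero with the size of the square.\<close>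
lemma hessian_symmetric:
  fixes f :: "real^'n \<Rightarrow> real" and g :: "real^'n \<Rightarrow> real^'n" and H :: "real^'n \<Rightarrow> real^'n^'n"
  assumes "open S" "x \<in> S" "0 \<le> LH"
    and grad: "\<forall>y\<in>S. (f has_derivative (\<lambda>h. g y \<bullet> h)) (at y)"
    and hess: "\<forall>y\<in>S. (g has_derivative (\<lambda>h. H y *v h)) (at y)"
    and H_lip: "\<forall>y\<in>S. \<forall>z\<in>S. onorm (\<lambda>v. (H y - H z) *v v) \<le> LH * norm (y - z)"
  shows "(H x *v u) \<bullet> v = (H x *v v) \<bullet> u"
proof -
  obtain R where "R > 0" and R: "ball x R \<subseteq> S" using assms(1,2) open_contains_ball by blast
  define N where "N = norm u + norm v"
  define C where "C = 2 * LH * N * norm u * norm v"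
  have in_ball: "x + a *\<^sub>R w1 + b *\<^sub>R w2 \<in> S"
    if "t < R / (N + 1)" "a \<in> {0..t}" "b \<in> {0..t}" "norm w1 + norm w2 = N" for t a b w1 w2
  proof -
    have "t * N \<le> t * (N + 1)" using that(2) by (simp add: distrib_left)
    also have "\<dots> < R" using that(1) by (simp add: N_def pos_less_divide_eq add_nonneg_pos)
    finally have "norm (a *\<^sub>R w1 + b *\<^sub>R w2) < R"
      using norm_scaleR_add_le[OF that(2,3), of w1 w2] that(4) by simp
    moreover have "dist x (x + a *\<^sub>R w1 + b *\<^sub>R w2) = norm (a *\<^sub>R w1 + b *\<^sub>R w2)"
      by (metis add.assoc add_diff_cancel_left' dist_commute dist_norm)
    ultimately show ?thesis using R by auto
  qed
  have "\<bar>(H x *v u) \<bullet> v - (H x *v v) \<bullet> u\<bar> \<le> C * t" if "0 < t" "t < R / (N + 1)" for t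
    unfolding C_def N_def
    using hessian_asymmetry_le[OF that(1) \<open>0 \<le> LH\<close> _ grad hess H_lip] in_ball[OF that(2)]
    by (simp add: N_def add.commute mult_ac)
  then have eventually_le: "\<forall>\<^sub>F t in at_right 0. \<bar>(H x *v u) \<bullet> v - (H x *v v) \<bullet> u\<bar> \<le> C * t"
    using \<open>R > 0\<close> by (intro eventually_at_rightI[of 0 "R / (N + 1)"]) (auto simp: N_def add_nonneg_pos)
  have "((\<lambda>t. C * t) \<longlongrightarrow> 0) (at_right 0)"
    by (auto intro!: tendsto_eq_intros)
  from tendsto_lowerbound[OF this eventually_le]
  have "\<bar>(H x *v u) \<bullet> v - (H x *v v) \<bullet> u\<bar> \<le> 0" by simp
  then show ?thesis by simp
qed

section \<open>Conjugate gradient iterates\<close>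

text \<open>The iterates of Algorithm 2, with \<open>A = H + 2\<epsilon>I\<close>, after \<open>J\<close> passes through the loop in which
no exit test fired.\<close>
locale conjugate_gradient =
  fixes A :: "real^'n^'n" and g :: "real^'n" and y r p :: "nat \<Rightarrow> real^'n" and J :: nat
  assumes symmetric: "\<And>u v. u \<bullet> (A *v v) = v \<bullet> (A *v u)"
    and iterate_0: "y 0 = 0" and residual_0: "r 0 = g" and direction_0: "p 0 = - g"
    and g_nonzero: "g \<noteq> 0"
    and curvature_pos: "\<And>j. j < J \<Longrightarrow> p j \<bullet> (A *v p j) > 0"
    and residual_Suc_nonzero: "\<And>j. j < J \<Longrightarrow> r (Suc j) \<noteq> 0"
    and iterate_Suc': "\<And>j. j < J \<Longrightarrow>
      y (Suc j) = y j + ((norm (r j))\<^sup>2 / (p j \<bullet> (A *v p j))) *\<^sub>R p j"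
    and residual_Suc': "\<And>j. j < J \<Longrightarrow>
      r (Suc j) = r j + ((norm (r j))\<^sup>2 / (p j \<bullet> (A *v p j))) *\<^sub>R (A *v p j)"
    and direction_Suc': "\<And>j. j < J \<Longrightarrow>
      p (Suc j) = - r (Suc j) + ((norm (r (Suc j)))\<^sup>2 / (norm (r j))\<^sup>2) *\<^sub>R p j"
begin

definition \<alpha> :: "nat \<Rightarrow> real" where "\<alpha> j = (norm (r j))\<^sup>2 / (p j \<bullet> (A *v p j))"
definition \<beta> :: "nat \<Rightarrow> real" where "\<beta> j = (norm (r (Suc j)))\<^sup>2 / (norm (r j))\<^sup>2"

lemma iterate_Suc: "j < J \<Longrightarrow> y (Suc j) = y j + \<alpha> j *\<^sub>R p j"
  using iterate_Suc' by (simp add: \<alpha>_def)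

lemma residual_Suc: "j < J \<Longrightarrow> r (Suc j) = r j + \<alpha> j *\<^sub>R (A *v p j)"
  using residual_Suc' by (simp add: \<alpha>_def)

lemma direction_Suc: "j < J \<Longrightarrow> p (Suc j) = - r (Suc j) + \<beta> j *\<^sub>R p j"
  using direction_Suc' by (simp add: \<beta>_def)

lemma residual_nonzero: "j \<le> J \<Longrightarrow> r j \<noteq> 0"
  by (cases j) (auto simp: residual_0 g_nonzero residual_Suc_nonzero)

lemma alpha_pos: "j < J \<Longrightarrow> \<alpha> j > 0"
  using residual_nonzero[of j] curvature_pos[of j] by (simp add: \<alpha>_def)

lemma alpha_mult_curvature: "j < J \<Longrightarrow> \<alpha> j * (p j \<bullet> (A *v p j)) = (norm (r j))\<^sup>2"
  using curvature_pos[of j] by (simp add: \<alpha>_def)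

lemma beta_mult_curvature:
  "j < J \<Longrightarrow> \<beta> j * (p j \<bullet> (A *v p j)) = (norm (r (Suc j)))\<^sup>2 / \<alpha> j"
  using curvature_pos[of j] residual_nonzero[of j] by (simp add: \<alpha>_def \<beta>_def)

lemma residual_eq: "j \<le> J \<Longrightarrow> r j = g + A *v y j"
proof (induction j)
  case 0
  then show ?case by (simp add: residual_0 iterate_0)
next
  case (Suc j)
  then show ?case
    by (simp add: residual_Suc iterate_Suc matrix_vector_right_distrib matrix_vector_mult_scaleR)
qed

lemma residual_eq_direction:
  "j \<le> J \<Longrightarrow> r j = - p j + (if j = 0 then 0 else \<beta> (j - 1) *\<^sub>R p (j - 1))"
  by (cases j) (simp_all add: residual_0 direction_0 direction_Suc)

lemma matrix_direction_eq: "j < J \<Longrightarrow> A *v p j = (1 / \<alpha> j) *\<^sub>R (r (Suc j) - r j)"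
  using residual_Suc[of j] alpha_pos[of j] by simp

definition orthogonal_upto :: "nat \<Rightarrow> bool" where
  "orthogonal_upto j \<longleftrightarrow> (\<forall>i<j. r j \<bullet> r i = 0 \<and> r j \<bullet> p i = 0 \<and> p j \<bullet> (A *v p i) = 0)"

lemma residual_inner_direction:
  assumes "j \<le> J" and "orthogonal_upto j"
  shows "r j \<bullet> p j = - (norm (r j))\<^sup>2"
proof (cases j)
  case 0
  then show ?thesis by (simp add: residual_0 direction_0 power2_norm_eq_inner)
next
  case (Suc i)
  then have "r j \<bullet> p i = 0" using assms(2) by (simp add: orthogonal_upto_def)
  with Suc \<open>j \<le> J\<close> show ?thesis
    by (simp add: direction_Suc inner_diff_right power2_norm_eq_inner)
qed

lemma direction_conjugate:
  assumes "orthogonal_upto j" "i < j"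
  shows "(A *v p j) \<bullet> p i = 0"
proof -
  have "p j \<bullet> (A *v p i) = 0" using assms by (simp add: orthogonal_upto_def)
  then show ?thesis using symmetric[of "p j" "p i"] by (metis inner_commute)
qed

lemma residual_Suc_orthogonal:
  assumes "j < J" "orthogonal_upto j" "i \<le> j"
  shows "r (Suc j) \<bullet> r i = 0 \<and> r (Suc j) \<bullet> p i = 0"
proof -
  have conj_residual: "(A *v p j) \<bullet> r i = (if i = j then - (p j \<bullet> (A *v p j)) else 0)"
    using residual_eq_direction[of i] assms direction_conjugate[OF assms(2), of i]
      direction_conjugate[OF assms(2), of "i - 1"]
    by (auto simp: inner_diff_right inner_commute)
  show ?thesis
  proof (cases "i = j")
    case True
    then show ?thesis
      using residual_inner_direction[of j] alpha_mult_curvature[of j] conj_residual assms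
      by (simp add: residual_Suc inner_add_left power2_norm_eq_inner
          inner_commute[of "A *v p j" "p j"] inner_commute[of "p j" "r j"])
  next
    case False
    with assms have "i < j" by simp
    then show ?thesis
      using assms direction_conjugate[OF assms(2) \<open>i < j\<close>] conj_residual
      by (simp add: orthogonal_upto_def residual_Suc inner_add_left)
  qed
qed

lemma orthogonal_upto_Suc:
  assumes "j < J" and IH: "orthogonal_upto j"
  shows "orthogonal_upto (Suc j)"
proof -
  note residual = residual_Suc_orthogonal[OF assms]
  have "p (Suc j) \<bullet> (A *v p i) = 0" if "i \<le> j" for i
  proof (cases "i = j")
    case True
    have "r (Suc j) \<bullet> (A *v p j) = (norm (r (Suc j)))\<^sup>2 / \<alpha> j"
      using residual[of j] \<open>j < J\<close>
      by (simp add: matrix_direction_eq inner_diff_right power2_norm_eq_inner)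
    with True show ?thesis
      using beta_mult_curvature[OF \<open>j < J\<close>] by (simp add: direction_Suc[OF \<open>j < J\<close>] inner_diff_left)
  next
    case False
    with that have "i < j" by simp
    then have "r (Suc j) \<bullet> (A *v p i) = 0"
      using residual[of i] residual[of "Suc i"] \<open>j < J\<close>
      by (simp add: matrix_direction_eq inner_diff_right)
    with \<open>i < j\<close> IH show ?thesis
      by (simp add: orthogonal_upto_def direction_Suc[OF \<open>j < J\<close>] inner_diff_left)
  qed
  with residual show ?thesis
    by (simp add: orthogonal_upto_def less_Suc_eq_le)
qed

lemma orthogonal: "j \<le> J \<Longrightarrow> orthogonal_upto j"
proof (induction j)
  case 0
  then show ?case by (simp add: orthogonal_upto_def)
next
  case (Suc j)
  then show ?case by (intro orthogonal_upto_Suc) auto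
qed

lemma iterate_eq_sum: "j \<le> J \<Longrightarrow> y j = (\<Sum>i<j. \<alpha> i *\<^sub>R p i)"
  by (induction j) (auto simp: iterate_0 iterate_Suc)

lemma residual_inner_iterate: "j \<le> J \<Longrightarrow> r j \<bullet> y j = 0"
  using orthogonal[of j] by (simp add: orthogonal_upto_def iterate_eq_sum inner_sum_right)

lemma iterate_conjugate_direction: "j \<le> J \<Longrightarrow> y j \<bullet> (A *v p j) = 0"
proof -
  assume "j \<le> J"
  have "p i \<bullet> (A *v p j) = 0" if "i < j" for i
    using orthogonal[OF \<open>j \<le> J\<close>] that symmetric by (metis orthogonal_upto_def)
  then show ?thesis by (simp add: iterate_eq_sum[OF \<open>j \<le> J\<close>] inner_sum_left)
qed

lemma iterate_curvature_nonneg: "j \<le> J \<Longrightarrow> 0 \<le> y j \<bullet> (A *v y j)"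
proof (induction j)
  case 0
  then show ?case by (simp add: iterate_0)
next
  case (Suc j)
  then have "j < J" by simp
  have "y j \<bullet> (A *v p j) = 0" "p j \<bullet> (A *v y j) = 0"
    using iterate_conjugate_direction[of j] symmetric[of "p j" "y j"] \<open>j < J\<close> by auto
  then have "y (Suc j) \<bullet> (A *v y (Suc j)) = y j \<bullet> (A *v y j) + (\<alpha> j)\<^sup>2 * (p j \<bullet> (A *v p j))"
    by (simp add: iterate_Suc[OF \<open>j < J\<close>] matrix_vector_right_distrib matrix_vector_mult_scaleR
        inner_add_left inner_add_right power2_eq_square)
  with Suc curvature_pos[OF \<open>j < J\<close>] show ?case by simp
qed

lemma iterate_inner_direction_nonneg: "j \<le> J \<Longrightarrow> 0 \<le> y j \<bullet> p j"
proof (induction j)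
  case 0
  then show ?case by (simp add: iterate_0)
next
  case (Suc j)
  then have "j < J" by simp
  have "y (Suc j) \<bullet> p (Suc j) = \<beta> j * (y (Suc j) \<bullet> p j)"
    using residual_inner_iterate[OF Suc.prems]
    by (simp add: direction_Suc[OF \<open>j < J\<close>] inner_diff_right inner_commute[of "y (Suc j)"])
  also have "\<dots> = \<beta> j * (y j \<bullet> p j + \<alpha> j * (p j \<bullet> p j))"
    by (simp add: iterate_Suc[OF \<open>j < J\<close>] inner_add_left)
  finally show ?case
    using Suc alpha_pos[OF \<open>j < J\<close>] by (simp add: \<beta>_def)
qed

lemma model_along_direction:
  "model_increment g A (y J + \<sigma> *\<^sub>R p J)
     = - 1/2 * (y J \<bullet> (A *v y J)) - \<sigma> * (norm (r J))\<^sup>2 + \<sigma>\<^sup>2 / 2 * (p J \<bullet> (A *v p J))"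
proof -
  have g_eq: "g = r J - A *v y J" using residual_eq[of J] by simp
  have "r J \<bullet> y J = 0" "y J \<bullet> (A *v p J) = 0" "p J \<bullet> (A *v y J) = 0"
    "r J \<bullet> p J = - (norm (r J))\<^sup>2"
    using residual_inner_iterate iterate_conjugate_direction symmetric[of "p J" "y J"]
      residual_inner_direction orthogonal by auto
  then show ?thesis
    unfolding model_increment_def g_eq
    by (simp add: matrix_vector_right_distrib matrix_vector_mult_scaleR inner_add_left
        inner_add_right inner_diff_left inner_commute[of "A *v y J" "y J"]
        inner_commute[of "A *v y J" "p J"] power2_eq_square algebra_simps)
qed

lemma norm_along_direction:
  "(norm (y J + \<sigma> *\<^sub>R p J))\<^sup>2 = (norm (y J))\<^sup>2 + 2 * \<sigma> * (y J \<bullet> p J) + \<sigma>\<^sup>2 * (norm (p J))\<^sup>2"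
  unfolding power2_norm_eq_inner
  by (simp add: inner_add_left inner_add_right inner_commute[of "p J" "y J"]
      power2_eq_square algebra_simps)

lemma norm_along_direction_less:
  assumes "p J \<noteq> 0" "0 \<le> \<sigma>" "\<sigma> < \<tau>"
  shows "norm (y J + \<sigma> *\<^sub>R p J) < norm (y J + \<tau> *\<^sub>R p J)"
proof -
  have "2 * \<sigma> * (y J \<bullet> p J) \<le> 2 * \<tau> * (y J \<bullet> p J)"
    using assms iterate_inner_direction_nonneg[of J] by (simp add: mult_right_mono)
  moreover have "\<sigma>\<^sup>2 * (norm (p J))\<^sup>2 < \<tau>\<^sup>2 * (norm (p J))\<^sup>2"
    using assms by (simp add: power_strict_mono)
  ultimately have "(norm (y J + \<sigma> *\<^sub>R p J))\<^sup>2 < (norm (y J + \<tau> *\<^sub>R p J))\<^sup>2"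
    by (simp add: norm_along_direction)
  then show ?thesis by (simp add: power_less_imp_less_base)
qed

text \<open>The three exits of Algorithm 2 other than \<open>INT_MAX\<close>: negative curvature, the boundary
(reached before the full CG step) and the full CG step.\<close>
lemma model_along_direction_le:
  assumes "0 \<le> \<epsilon>" "0 \<le> \<sigma>"
    and exit: "p J \<bullet> (A *v p J) \<le> \<epsilon> * (norm (p J))\<^sup>2
      \<or> norm (y J + \<sigma> *\<^sub>R p J) \<le> norm (y J + \<alpha> J *\<^sub>R p J)"
  shows "model_increment g A (y J + \<sigma> *\<^sub>R p J) \<le> \<epsilon> / 2 * (norm (y J + \<sigma> *\<^sub>R p J))\<^sup>2"
proof -
  have quad_le: "model_increment g A (y J + \<sigma> *\<^sub>R p J) \<le> \<sigma>\<^sup>2 / 2 * (p J \<bullet> (A *v p J)) - \<sigma> * (norm (r J))\<^sup>2"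
    using iterate_curvature_nonneg[of J] by (simp add: model_along_direction)
  show ?thesis
  proof (cases "p J \<bullet> (A *v p J) \<le> \<epsilon> * (norm (p J))\<^sup>2")
    case True
    have "\<sigma>\<^sup>2 * (norm (p J))\<^sup>2 \<le> (norm (y J + \<sigma> *\<^sub>R p J))\<^sup>2"
      using \<open>0 \<le> \<sigma>\<close> iterate_inner_direction_nonneg[of J] by (simp add: norm_along_direction)
    have "\<sigma>\<^sup>2 / 2 * (p J \<bullet> (A *v p J)) \<le> \<sigma>\<^sup>2 / 2 * (\<epsilon> * (norm (p J))\<^sup>2)"
      using True by (simp add: mult_left_mono)
    also have "\<dots> = \<epsilon> / 2 * (\<sigma>\<^sup>2 * (norm (p J))\<^sup>2)" by simp
    also have "\<dots> \<le> \<epsilon> / 2 * (norm (y J + \<sigma> *\<^sub>R p J))\<^sup>2"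
      using \<open>0 \<le> \<epsilon>\<close> \<open>\<sigma>\<^sup>2 * (norm (p J))\<^sup>2 \<le> _\<close> by (simp add: mult_left_mono)
    finally have "\<sigma>\<^sup>2 / 2 * (p J \<bullet> (A *v p J)) \<le> \<epsilon> / 2 * (norm (y J + \<sigma> *\<^sub>R p J))\<^sup>2" .
    moreover have "0 \<le> \<sigma> * (norm (r J))\<^sup>2" using \<open>0 \<le> \<sigma>\<close> by simp
    ultimately show ?thesis using quad_le by linarith
  next
    case False
    moreover have "0 \<le> \<epsilon> * (norm (p J))\<^sup>2" using \<open>0 \<le> \<epsilon>\<close> by simp
    ultimately have curv: "p J \<bullet> (A *v p J) > 0" by linarith
    then have "p J \<noteq> 0" by auto
    have "0 \<le> \<alpha> J" using curv by (simp add: \<alpha>_def)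
    have "\<sigma> \<le> \<alpha> J"
    proof (rule ccontr)
      assume "\<not> \<sigma> \<le> \<alpha> J"
      then have "norm (y J + \<alpha> J *\<^sub>R p J) < norm (y J + \<sigma> *\<^sub>R p J)"
        using norm_along_direction_less[OF \<open>p J \<noteq> 0\<close> \<open>0 \<le> \<alpha> J\<close>] by simp
      with exit False show False by simp
    qed
    then have "\<sigma> * (\<sigma> * (p J \<bullet> (A *v p J))) \<le> \<sigma> * (\<alpha> J * (p J \<bullet> (A *v p J)))"
      using \<open>0 \<le> \<sigma>\<close> curv by (intro mult_left_mono mult_right_mono) auto
    then have "\<sigma>\<^sup>2 * (p J \<bullet> (A *v p J)) \<le> \<sigma> * (\<alpha> J * (p J \<bullet> (A *v p J)))"
      by (simp add: power2_eq_square mult.assoc)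
    also have "\<dots> = \<sigma> * (norm (r J))\<^sup>2" using curv by (simp add: \<alpha>_def)
    finally have "\<sigma>\<^sup>2 * (p J \<bullet> (A *v p J)) \<le> \<sigma> * (norm (r J))\<^sup>2" .
    moreover have "0 \<le> \<epsilon> / 2 * (norm (y J + \<sigma> *\<^sub>R p J))\<^sup>2" "0 \<le> \<sigma> * (norm (r J))\<^sup>2"
      using \<open>0 \<le> \<epsilon>\<close> \<open>0 \<le> \<sigma>\<close> by simp_all
    ultimately show ?thesis using quad_le by linarith
  qed
qed

end

section \<open>Trial steps of the trust-region method\<close>

lemma model_increment_shiftH: "model_increment g (shiftH H \<epsilon>) v = model_increment g H v + \<epsilon> * (norm v)\<^sup>2"
  by (simp add: model_increment_def shiftH_def matrix_vector_mult_add_rdistrib inner_add_right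
      power2_norm_eq_inner algebra_simps flip: scaleR_matrix_vector_assoc)

lemma conjugate_gradientI:
  fixes H :: "real^'n^'n"
  assumes symmetric: "\<And>u v. u \<bullet> (H *v v) = v \<bullet> (H *v u)"
    and "0 < \<epsilon>" "0 \<le> \<zeta>" "g \<noteq> 0" "y 0 = 0" "r 0 = g" "p 0 = - g"
    and loop: "\<And>j. j < J \<Longrightarrow> p j \<bullet> (A *v p j) > \<epsilon> * (norm (p j))\<^sup>2 \<and>
      y (Suc j) = y j + ((norm (r j))\<^sup>2 / (p j \<bullet> (A *v p j))) *\<^sub>R p j \<and>
      r (Suc j) = r j + ((norm (r j))\<^sup>2 / (p j \<bullet> (A *v p j))) *\<^sub>R (A *v p j) \<and>
      \<not> norm (r (Suc j)) \<le> \<zeta> / 2 * min (norm g) (\<epsilon> * norm (y (Suc j))) \<and>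
      p (Suc j) = - r (Suc j) + ((norm (r (Suc j)))\<^sup>2 / (norm (r j))\<^sup>2) *\<^sub>R p j"
    and A: "A = shiftH H \<epsilon>"
  shows "conjugate_gradient A g y r p J"
proof
  show "u \<bullet> (A *v v) = v \<bullet> (A *v u)" for u v
    using symmetric[of u v] inner_commute[of u v]
    by (simp add: A shiftH_def matrix_vector_mult_add_rdistrib inner_add_right
        flip: scaleR_matrix_vector_assoc)
  show "p j \<bullet> (A *v p j) > 0" if "j < J" for j
  proof -
    have "0 \<le> \<epsilon> * (norm (p j))\<^sup>2" using \<open>0 < \<epsilon>\<close> by simp
    with loop[OF that] show ?thesis by linarith
  qed
  show "r (Suc j) \<noteq> 0" if "j < J" for j
  proof -
    have "0 \<le> \<zeta> / 2 * min (norm g) (\<epsilon> * norm (y (Suc j)))" using \<open>0 < \<epsilon>\<close> \<open>0 \<le> \<zeta>\<close> by simp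
    with loop[OF that] show ?thesis by force
  qed
qed (use assms in auto)

lemma truncated_cg_exit:
  fixes H :: "real^'n^'n"
  assumes tc: "truncated_cg g H \<epsilon> \<delta> \<zeta> capCG M s flag"
    and "flag \<noteq> INT_MAX" "g \<noteq> 0" "0 < \<epsilon>" "0 \<le> \<zeta>" "0 < \<delta>"
    and symmetric: "\<And>u v. u \<bullet> (H *v v) = v \<bullet> (H *v u)"
  obtains y r p J \<sigma> where "conjugate_gradient (shiftH H \<epsilon>) g y r p J"
    and "0 \<le> \<sigma>" "s = y J + \<sigma> *\<^sub>R p J" "s \<noteq> 0" "norm s \<le> \<delta>"
    and "p J \<bullet> (shiftH H \<epsilon> *v p J) \<le> \<epsilon> * (norm (p J))\<^sup>2
      \<or> norm s \<le> norm (y J + conjugate_gradient.\<alpha> (shiftH H \<epsilon>) r p J *\<^sub>R p J)"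
proof -
  define A where "A = shiftH H \<epsilon>"
  define kmax where "kmax = cg_kmax capCG M \<epsilon> \<zeta> CARD('n)"
  obtain y r p J where init: "y 0 = 0" "r 0 = g" "p 0 = - g"
    and loop: "\<forall>j<J. real j < kmax \<and> p j \<bullet> (A *v p j) > \<epsilon> * (norm (p j))\<^sup>2 \<and>
      y (Suc j) = y j + ((norm (r j))\<^sup>2 / (p j \<bullet> (A *v p j))) *\<^sub>R p j \<and>
      norm (y (Suc j)) < \<delta> \<and>
      r (Suc j) = r j + ((norm (r j))\<^sup>2 / (p j \<bullet> (A *v p j))) *\<^sub>R (A *v p j) \<and>
      \<not> norm (r (Suc j)) \<le> \<zeta> / 2 * min (norm g) (\<epsilon> * norm (y (Suc j))) \<and>
      p (Suc j) = - r (Suc j) + ((norm (r (Suc j)))\<^sup>2 / (norm (r j))\<^sup>2) *\<^sub>R p j"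
    and exit: "(kmax \<le> real J \<and> flag = INT_MAX \<and> s = y J)
      \<or> (real J < kmax \<and> p J \<bullet> (A *v p J) \<le> \<epsilon> * (norm (p J))\<^sup>2 \<and>
          flag = BND_NEG \<and> (\<exists>\<sigma>\<ge>0. s = y J + \<sigma> *\<^sub>R p J \<and> norm s = \<delta>))
      \<or> (real J < kmax \<and> p J \<bullet> (A *v p J) > \<epsilon> * (norm (p J))\<^sup>2 \<and>
          ((norm (y J + ((norm (r J))\<^sup>2 / (p J \<bullet> (A *v p J))) *\<^sub>R p J) \<ge> \<delta> \<and> flag = BND_NORM \<and>
             (\<exists>\<sigma>\<ge>0. s = y J + \<sigma> *\<^sub>R p J \<and> norm s = \<delta>))
          \<or> (norm (y J + ((norm (r J))\<^sup>2 / (p J \<bullet> (A *v p J))) *\<^sub>R p J) < \<delta> \<and>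
             norm (r J + ((norm (r J))\<^sup>2 / (p J \<bullet> (A *v p J))) *\<^sub>R (A *v p J))
               \<le> \<zeta> / 2 * min (norm g) (\<epsilon> * norm (y J + ((norm (r J))\<^sup>2 / (p J \<bullet> (A *v p J))) *\<^sub>R p J)) \<and>
             flag = INT_RES \<and> s = y J + ((norm (r J))\<^sup>2 / (p J \<bullet> (A *v p J))) *\<^sub>R p J)))"
    using tc unfolding truncated_cg_def Let_def A_def[symmetric] kmax_def[symmetric] by blast
  have cg: "conjugate_gradient A g y r p J"
    using symmetric \<open>0 < \<epsilon>\<close> \<open>0 \<le> \<zeta>\<close> \<open>g \<noteq> 0\<close> init loop A_def
    by (intro conjugate_gradientI[of H \<epsilon> \<zeta> g y r p J A]) blast+
  interpret conjugate_gradient A g y r p J by (fact cg)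
  from exit[folded \<alpha>_def] \<open>flag \<noteq> INT_MAX\<close> show ?thesis
  proof (elim disjE conjE exE)
    assume "flag = INT_MAX"
    with \<open>flag \<noteq> INT_MAX\<close> show ?thesis by simp
  next
    fix \<sigma> assume "p J \<bullet> (A *v p J) \<le> \<epsilon> * (norm (p J))\<^sup>2"
      and "0 \<le> \<sigma>" "s = y J + \<sigma> *\<^sub>R p J" "norm s = \<delta>"
    with cg \<open>0 < \<delta>\<close> show ?thesis by (intro that[of y r p J \<sigma>]) (auto simp: A_def)
  next
    fix \<sigma> assume "\<delta> \<le> norm (y J + \<alpha> J *\<^sub>R p J)"
      and "0 \<le> \<sigma>" "s = y J + \<sigma> *\<^sub>R p J" "norm s = \<delta>"
    with cg \<open>0 < \<delta>\<close> show ?thesis by (intro that[of y r p J \<sigma>]) (auto simp: A_def)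
  next
    assume curv: "\<epsilon> * (norm (p J))\<^sup>2 < p J \<bullet> (A *v p J)"
      and "norm (y J + \<alpha> J *\<^sub>R p J) < \<delta>"
      and res: "norm (r J + \<alpha> J *\<^sub>R (A *v p J)) \<le> \<zeta> / 2 * min (norm g) (\<epsilon> * norm (y J + \<alpha> J *\<^sub>R p J))"
      and s: "s = y J + \<alpha> J *\<^sub>R p J"
    have "r J + \<alpha> J *\<^sub>R (A *v p J) = g + A *v s"
      using residual_eq[of J] by (simp add: s matrix_vector_right_distrib matrix_vector_mult_scaleR)
    with res s \<open>g \<noteq> 0\<close> have "s \<noteq> 0" by auto
    moreover have "0 \<le> \<epsilon> * (norm (p J))\<^sup>2" using \<open>0 < \<epsilon>\<close> by simp
    with curv have "0 \<le> \<alpha> J" by (simp add: \<alpha>_def)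
    ultimately show ?thesis
      using cg s \<open>norm (y J + \<alpha> J *\<^sub>R p J) < \<delta>\<close>
      by (intro that[of y r p J "\<alpha> J"]) (auto simp: A_def)
  qed
qed

lemma truncated_cg_decrease:
  fixes H :: "real^'n^'n"
  assumes "truncated_cg g H \<epsilon> \<delta> \<zeta> capCG M s flag"
    and "flag \<noteq> INT_MAX" "g \<noteq> 0" "0 < \<epsilon>" "0 \<le> \<zeta>" "0 < \<delta>"
    and "\<And>u v. u \<bullet> (H *v v) = v \<bullet> (H *v u)"
  shows "0 < norm s \<and> norm s \<le> \<delta> \<and> \<epsilon> / 2 * (norm s)\<^sup>2 \<le> - model_increment g H s"
proof -
  obtain y r p J \<sigma> where cg: "conjugate_gradient (shiftH H \<epsilon>) g y r p J"
    and "0 \<le> \<sigma>" and s: "s = y J + \<sigma> *\<^sub>R p J" and "s \<noteq> 0" "norm s \<le> \<delta>"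
    and exit: "p J \<bullet> (shiftH H \<epsilon> *v p J) \<le> \<epsilon> * (norm (p J))\<^sup>2
      \<or> norm s \<le> norm (y J + conjugate_gradient.\<alpha> (shiftH H \<epsilon>) r p J *\<^sub>R p J)"
    by (rule truncated_cg_exit[OF assms])
  have "model_increment g (shiftH H \<epsilon>) s \<le> \<epsilon> / 2 * (norm s)\<^sup>2"
    unfolding s using conjugate_gradient.model_along_direction_le[OF cg _ \<open>0 \<le> \<sigma>\<close>] exit \<open>0 < \<epsilon>\<close> s
    by simp
  with \<open>s \<noteq> 0\<close> \<open>norm s \<le> \<delta>\<close> show ?thesis by (simp add: model_increment_shiftH)
qed

lemma meo_decrease:
  assumes "meo_returns g H \<epsilon> \<delta> s" "0 \<le> \<epsilon>"
  shows "norm s = \<delta> \<and> \<epsilon> / 4 * (norm s)\<^sup>2 \<le> - model_increment g H s"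
  using assms by (auto simp: meo_returns_def model_increment_def)

lemma alg4_step_decrease:
  assumes step: "alg4_step f g H \<epsilon>g \<epsilon>H \<gamma>1 \<gamma>2 \<psi> \<delta>max \<eta> \<zeta> capCG M xk dk sk x' d'"
    and "0 < \<epsilon>g" "0 < \<epsilon>H" "0 \<le> \<zeta>" "0 < dk"
    and "\<And>u v. u \<bullet> (H xk *v v) = v \<bullet> (H xk *v u)"
  shows "0 < norm sk \<and> norm sk \<le> dk \<and> \<epsilon>H / 4 * (norm sk)\<^sup>2 \<le> - model_increment (g xk) (H xk) sk"
proof -
  obtain sCG outCG where call: "alg4_cg_call g H \<epsilon>H \<zeta> capCG M xk dk sCG outCG"
    and choice: "if alg4_use_cg \<epsilon>g (g xk) outCG then sk = sCG
      else meo_returns (g xk) (H xk) \<epsilon>H dk sk"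
    using step unfolding alg4_step_def by blast
  show ?thesis
  proof (cases "alg4_use_cg \<epsilon>g (g xk) outCG")
    case True
    have "g xk \<noteq> 0"
      using True call \<open>0 < \<epsilon>g\<close> by (auto simp: alg4_cg_call_def alg4_use_cg_def)
    with call have "truncated_cg (g xk) (H xk) \<epsilon>H dk \<zeta> capCG M sCG outCG"
      by (simp add: alg4_cg_call_def)
    moreover have "outCG \<noteq> INT_MAX" using True by (auto simp: alg4_use_cg_def)
    ultimately have "0 < norm sCG \<and> norm sCG \<le> dk \<and> \<epsilon>H / 2 * (norm sCG)\<^sup>2 \<le> - model_increment (g xk) (H xk) sCG"
      using truncated_cg_decrease \<open>g xk \<noteq> 0\<close> assms(3-) by blast
    moreover have "\<epsilon>H / 4 * (norm sCG)\<^sup>2 \<le> \<epsilon>H / 2 * (norm sCG)\<^sup>2" using \<open>0 < \<epsilon>H\<close> by simp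
    ultimately show ?thesis using True choice by auto
  next
    case False
    with choice meo_decrease[of "g xk" "H xk" \<epsilon>H dk sk] \<open>0 < \<epsilon>H\<close> \<open>0 < dk\<close> show ?thesis by auto
  qed
qed

lemma small_ratio_imp_long_step:
  fixes n P \<Delta>f LH \<epsilon> \<eta> :: real
  assumes "0 < \<epsilon>" "\<eta> < 1" "0 < LH" "0 < n"
    and decrease: "\<epsilon> / 4 * n\<^sup>2 \<le> P" and taylor: "P - LH / 6 * n ^ 3 \<le> \<Delta>f"
    and ratio: "\<Delta>f / P < \<eta>"
  shows "3 * (1 - \<eta>) * \<epsilon> / (2 * LH) < n"
proof -
  have "0 < \<epsilon> / 4 * n\<^sup>2" using \<open>0 < \<epsilon>\<close> \<open>0 < n\<close> by simp
  with decrease have "0 < P" by linarith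
  with ratio have "\<Delta>f < \<eta> * P" by (simp add: pos_divide_less_eq)
  with taylor have "(1 - \<eta>) * P < LH / 6 * n ^ 3" by (simp add: algebra_simps)
  moreover have "(1 - \<eta>) * (\<epsilon> / 4 * n\<^sup>2) \<le> (1 - \<eta>) * P"
    using \<open>\<eta> < 1\<close> decrease by (simp add: mult_left_mono)
  ultimately have "(1 - \<eta>) * (\<epsilon> / 4 * n\<^sup>2) < LH / 6 * n ^ 3" by linarith
  moreover have "(1 - \<eta>) * (\<epsilon> / 4 * n\<^sup>2) = ((1 - \<eta>) * \<epsilon> / 4) * n\<^sup>2"
    and "LH / 6 * n ^ 3 = (LH / 6 * n) * n\<^sup>2"
    by (simp_all add: power2_eq_square power3_eq_cube)
  ultimately have "((1 - \<eta>) * \<epsilon> / 4) * n\<^sup>2 < (LH / 6 * n) * n\<^sup>2" by linarith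
  then have "(1 - \<eta>) * \<epsilon> / 4 < LH / 6 * n" using \<open>0 < n\<close> by simp
  with \<open>0 < LH\<close> show ?thesis by (simp add: field_simps)
qed

lemma tr_rho_eq: "tr_rho f g H x s = (f x - f (x + s)) / - model_increment (g x) (H x) s"
  by (simp add: tr_rho_def qmodel_def model_increment_def)

lemma alg4_step_bounds:
  fixes f :: "real^'n \<Rightarrow> real" and g :: "real^'n \<Rightarrow> real^'n" and H :: "real^'n \<Rightarrow> real^'n^'n"
  assumes step: "alg4_step f g H \<epsilon>g \<epsilon>H \<gamma>1 \<gamma>2 \<psi> \<delta>max \<eta> \<zeta> capCG M xk dk sk x' d'"
    and "0 < \<epsilon>g" "0 < \<epsilon>H" "0 \<le> \<zeta>" "\<eta> < 1" "0 < dk" "0 < LH"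
    and "open S" and seg: "closed_segment xk (xk + sk) \<subseteq> S"
    and grad: "\<forall>y\<in>S. (f has_derivative (\<lambda>h. g y \<bullet> h)) (at y)"
    and hess: "\<forall>y\<in>S. (g has_derivative (\<lambda>h. H y *v h)) (at y)"
    and H_lip: "\<forall>y\<in>S. \<forall>z\<in>S. onorm (\<lambda>v. (H y - H z) *v v) \<le> LH * norm (y - z)"
  shows "0 < norm sk \<and> norm sk \<le> dk
    \<and> (tr_rho f g H xk sk < \<eta> \<longrightarrow> 3 * (1 - \<eta>) * \<epsilon>H / (2 * LH) < norm sk)"
proof -
  have "xk \<in> S" using seg by auto
  have "u \<bullet> (H xk *v v) = v \<bullet> (H xk *v u)" for u v
    using hessian_symmetric[OF \<open>open S\<close> \<open>xk \<in> S\<close> _ grad hess H_lip, of v u] \<open>0 < LH\<close>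
    by (simp add: inner_commute)
  with alg4_step_decrease[OF step] assms(2-6)
  have decrease: "0 < norm sk" "norm sk \<le> dk" "\<epsilon>H / 4 * (norm sk)\<^sup>2 \<le> - model_increment (g xk) (H xk) sk"
    by auto
  have "f (xk + sk) \<le> f xk + model_increment (g xk) (H xk) sk + LH / 6 * norm sk ^ 3"
    by (rule cubic_taylor_upper_bound[OF seg grad hess H_lip])
  then have "- model_increment (g xk) (H xk) sk - LH / 6 * norm sk ^ 3 \<le> f xk - f (xk + sk)" by simp
  from small_ratio_imp_long_step[OF \<open>0 < \<epsilon>H\<close> \<open>\<eta> < 1\<close> \<open>0 < LH\<close> decrease(1,3) this]
  have "tr_rho f g H xk sk < \<eta> \<Longrightarrow> 3 * (1 - \<eta>) * \<epsilon>H / (2 * LH) < norm sk"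
    unfolding tr_rho_eq .
  with decrease show ?thesis by blast
qed

lemma alg4_step_radius_lower_bound:
  assumes step: "alg4_step f g H \<epsilon>g \<epsilon>H \<gamma>1 \<gamma>2 \<psi> \<delta>max \<eta> \<zeta> capCG M xk dk sk x' d'"
    and "0 \<le> m" "m \<le> dk" "m \<le> \<delta>max" "1 \<le> \<gamma>2" "0 < \<gamma>1" "m \<le> \<gamma>1 * B"
    and long_step: "tr_rho f g H xk sk < \<eta> \<Longrightarrow> B < norm sk"
  shows "m \<le> d'"
proof (cases "\<eta> \<le> tr_rho f g H xk sk")
  case True
  then have "d' = (if \<psi> * dk \<le> norm sk then min (\<gamma>2 * dk) \<delta>max else dk)"
    using step by (simp add: alg4_step_def)
  moreover have "dk \<le> \<gamma>2 * dk"
    using mult_right_mono[OF \<open>1 \<le> \<gamma>2\<close>, of dk] \<open>0 \<le> m\<close> \<open>m \<le> dk\<close> by simp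
  ultimately show ?thesis using \<open>m \<le> dk\<close> \<open>m \<le> \<delta>max\<close> by auto
next
  case False
  then have "d' = \<gamma>1 * norm sk" using step by (simp add: alg4_step_def)
  moreover have "\<gamma>1 * B \<le> \<gamma>1 * norm sk" using long_step False \<open>0 < \<gamma>1\<close> by simp
  ultimately show ?thesis using \<open>m \<le> \<gamma>1 * B\<close> by simp
qed

lemma alg4_run_radius_lower_bound:
  assumes run: "alg4_run f g H \<epsilon>g \<epsilon>H \<gamma>1 \<gamma>2 \<psi> x0 \<delta>0 \<delta>max \<eta> \<zeta> capCG M x d s K"
    and "0 \<le> m" "m \<le> \<delta>0" "\<delta>0 \<le> \<delta>max" "1 \<le> \<gamma>2" "0 < \<gamma>1" "m \<le> \<gamma>1 * B"
    and long_step: "\<And>k. k \<in> K \<Longrightarrow> m \<le> d k \<Longrightarrow> tr_rho f g H (x k) (s k) < \<eta> \<Longrightarrow> B < norm (s k)"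
    and "k \<in> K"
  shows "m \<le> d k"
  using \<open>k \<in> K\<close>
proof (induction k)
  case 0
  then show ?case using run \<open>m \<le> \<delta>0\<close> by (simp add: alg4_run_def)
next
  case (Suc k)
  with run have "k \<in> K" by (auto simp: alg4_run_def)
  with Suc.IH have "m \<le> d k" .
  from run \<open>k \<in> K\<close>
  have "alg4_step f g H \<epsilon>g \<epsilon>H \<gamma>1 \<gamma>2 \<psi> \<delta>max \<eta> \<zeta> capCG M (x k) (d k) (s k) (x (Suc k)) (d (Suc k))"
    by (simp add: alg4_run_def)
  then show ?case
    by (rule alg4_step_radius_lower_bound)
      (use assms(2-7) \<open>m \<le> d k\<close> long_step[OF \<open>k \<in> K\<close> \<open>m \<le> d k\<close>] in auto)
qed

theorem lemma4p2:
  fixes f :: "real^'n \<Rightarrow> real"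
    and g :: "real^'n \<Rightarrow> real^'n"
    and H :: "real^'n \<Rightarrow> real^'n^'n"
    and \<epsilon>g \<epsilon>H \<gamma>1 \<gamma>2 \<psi> \<delta>0 \<delta>max \<eta> \<zeta> \<xi> M Lg LH flow :: real
    and capCG :: bool
    and x0 :: "real^'n"
    and x :: "nat \<Rightarrow> real^'n" and d :: "nat \<Rightarrow> real" and s :: "nat \<Rightarrow> real^'n"
    and K :: "nat set" and S :: "(real^'n) set"
  assumes params: "\<epsilon>g > 0" "\<epsilon>H > 0" "0 < \<gamma>1" "\<gamma>1 < 1" "\<gamma>2 \<ge> 1" "1 / \<gamma>2 < \<psi>" "\<psi> \<le> 1"
      "\<delta>0 > 0" "\<delta>max \<ge> \<delta>0" "0 < \<eta>" "\<eta> < 1" "0 < \<zeta>" "\<zeta> < 1" "0 \<le> \<xi>" "\<xi> < 1" "M \<ge> Lg"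
    and run: "alg4_run f g H \<epsilon>g \<epsilon>H \<gamma>1 \<gamma>2 \<psi> x0 \<delta>0 \<delta>max \<eta> \<zeta> capCG M x d s K"
    and bounded_below: "\<forall>k\<in>K. f (x k) \<ge> flow"
    and S_open: "open S"
    and segs: "\<forall>k\<in>K. closed_segment (x k) (x k + s k) \<subseteq> S"
    and grad: "\<forall>y\<in>S. (f has_derivative (\<lambda>h. g y \<bullet> h)) (at y)"
    and hess: "\<forall>y\<in>S. (g has_derivative (\<lambda>h. H y *v h)) (at y)"
    and hess_cont: "continuous_on S H"
    and Lg_pos: "Lg > 0" and LH_pos: "LH > 0"
    and g_lip: "\<forall>y\<in>S. \<forall>z\<in>S. norm (g y - g z) \<le> Lg * norm (y - z)"
    and H_lip: "\<forall>y\<in>S. \<forall>z\<in>S. onorm (\<lambda>v. (H y - H z) *v v) \<le> LH * norm (y - z)"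
  shows "(\<forall>k\<in>K. tr_rho f g H (x k) (s k) < \<eta> \<longrightarrow> d k > 3 * (1 - \<eta>) * \<epsilon>H / (2 * LH))
       \<and> (\<forall>k\<in>K. d k \<ge> min \<delta>0 (3 * \<gamma>1 * (1 - \<eta>) / (2 * LH) * \<epsilon>H))
       \<and> min \<delta>0 (3 * \<gamma>1 * (1 - \<eta>) / (2 * LH) * \<epsilon>H) > 0"
proof -
  define B where "B = 3 * (1 - \<eta>) * \<epsilon>H / (2 * LH)"
  define m where "m = min \<delta>0 (3 * \<gamma>1 * (1 - \<eta>) / (2 * LH) * \<epsilon>H)"
  have "0 < m" using params LH_pos by (simp add: m_def)
  have "m \<le> 3 * \<gamma>1 * (1 - \<eta>) / (2 * LH) * \<epsilon>H" by (simp add: m_def)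
  also have "\<dots> = \<gamma>1 * B" using LH_pos by (simp add: B_def field_simps)
  finally have "m \<le> \<gamma>1 * B" .
  have bounds: "0 < norm (s k) \<and> norm (s k) \<le> d k \<and> (tr_rho f g H (x k) (s k) < \<eta> \<longrightarrow> B < norm (s k))"
    if "k \<in> K" "0 < d k" for k
    using alg4_step_bounds[OF _ _ _ _ _ \<open>0 < d k\<close> LH_pos S_open _ grad hess H_lip] run that params segs
    unfolding alg4_run_def B_def by auto
  have radius: "m \<le> d k" if "k \<in> K" for k
    using alg4_run_radius_lower_bound[OF run _ _ _ _ _ \<open>m \<le> \<gamma>1 * B\<close> _ that] bounds \<open>0 < m\<close> params
    by (simp add: m_def)
  have "B < d k" if "k \<in> K" "tr_rho f g H (x k) (s k) < \<eta>" for k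
    using bounds[OF that(1)] radius[OF that(1)] \<open>0 < m\<close> that(2) by fastforce
  with radius \<open>0 < m\<close> show ?thesis unfolding B_def m_def by blast
qed

end
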